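(* Let $P$ be a disjunctive program and $P_1,P_2,\dots$ a module sequence for $P$. Then $M$ is a stable model of $P$ if and only if there exists a sequence $M_1,M_2,\dots$ such that (1) for each $i\ge1$, $M_i$ is a stable model of $P_i$; (2) for each $i\ge 1$, $M_i=M_{i+1}\cap\mathit{atom}(P_i)$; (3) $M=\bigcup_{i\ge1}M_i$.
   Context: A disjunctive program is a set of rules $r$ of the form $A_1\vee\dots\vee A_m\leftarrow L_1,\dots,L_n$ ($m>0$, $n\ge0$), $A_j$ atoms, $L_i$ atoms or negated atoms $\mathtt{not}\,A$, possibly with function symbols; $head(r)=\{A_1,\dots,A_m\}$, $body^+(r)$ (resp. $body^-(r)$) is the set of atoms $A$ such that $A$ (resp. $\mathtt{not}\,A$) is among the $L_i$. $\mathsf{Ground}(P)$ is the ground instantiation of $P$; for a set $X$ of ground rules, $\mathit{atom}(X)$ is the set of ground atoms occurring in $X$. For a set of ground atoms $M$, the Gelfond–Lifschitz reduct $P^M$ is obtained from $\mathsf{Ground}(P)$ (for a ground program, from the program itself) by deleting every rule $r$ with $body^-(r)\cap M\neq\emptyset$ and deleting all negative literals from the remaining rules. $M$ is a stable model of $P$ iff $M$ is a minimal (w.r.t. set inclusion) Herbrand model of $P^M$. The dependency graph of $P$ has ground atoms as vertices and an edge $A\to B$ whenever for some $r\in\mathsf{Ground}(P)$, $A\in head(r)$ and $B$ occurs in $r$ (body or head); $A$ depends on $B$ if there is a directed path from $A$ to $B$ (every atom depends on itself). $GH$ is the set of ground atoms occurring in heads of rules in $\mathsf{Ground}(P)$;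 for an enumeration $p_1,p_2,\dots$ of $GH$, the induced module sequence is $P_1=\{r\in\mathsf{Ground}(P)\mid p_1\text{ depends on some }A\in head(r)\}$, $P_{i+1}=P_i\cup\{r\in\mathsf{Ground}(P)\mid p_{i+1}\text{ depends on some }A\in head(r)\}$. A module sequence for $P$ is one induced by some enumeration of $GH$. *)

theory Defs
  imports Main
begin

text \<open>Ground disjunctive rules  A1 v ... v Am <- B1,...,Bk, not C1,...,not Cl
  over ground atoms of type 'a.  A (ground) program is a set of such rules;
  a program with variables is represented by its ground instantiation Ground(P).\<close>

datatype 'a rule = Rule (rhead: "'a list") (rpos: "'a list") (rneg: "'a list")

definition head :: "'a rule \<Rightarrow> 'a set" where "head r = set (rhead r)"
definition body_pos :: "'a rule \<Rightarrow> 'a set" where "body_pos r = set (rpos r)"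
definition body_neg :: "'a rule \<Rightarrow> 'a set" where "body_neg r = set (rneg r)"

definition atoms_of_rule :: "'a rule \<Rightarrow> 'a set" where
  "atoms_of_rule r = head r \<union> body_pos r \<union> body_neg r"

definition atom :: "'a rule set \<Rightarrow> 'a set" where
  "atom X = (\<Union>r\<in>X. atoms_of_rule r)"

definition reduct :: "'a rule set \<Rightarrow> 'a set \<Rightarrow> 'a rule set" where
  "reduct P M = (\<lambda>r. Rule (rhead r) (rpos r) []) ` {r \<in> P. body_neg r \<inter> M = {}}"

text \<open>M is a (Herbrand) model of a program (negation-free programs in use).\<close>
definition is_model :: "'a rule set \<Rightarrow> 'a set \<Rightarrow> bool" where
  "is_model Q M \<longleftrightarrow> (\<forall>r\<in>Q. body_pos r \<subseteq> M \<and> body_neg r \<inter> M = {} \<longrightarrow> head r \<inter> M \<noteq> {})"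

definition minimal_model :: "'a rule set \<Rightarrow> 'a set \<Rightarrow> bool" where
  "minimal_model Q M \<longleftrightarrow> is_model Q M \<and> (\<forall>N. N \<subset> M \<longrightarrow> \<not> is_model Q N)"

definition stable_model :: "'a rule set \<Rightarrow> 'a set \<Rightarrow> bool" where
  "stable_model P M \<longleftrightarrow> minimal_model (reduct P M) M"

definition dep_edge :: "'a rule set \<Rightarrow> 'a \<Rightarrow> 'a \<Rightarrow> bool" where
  "dep_edge P A B \<longleftrightarrow> (\<exists>r\<in>P. A \<in> head r \<and> B \<in> atoms_of_rule r)"

definition depends :: "'a rule set \<Rightarrow> 'a \<Rightarrow> 'a \<Rightarrow> bool" where
  "depends P A B \<longleftrightarrow> (A, B) \<in> {(x, y). dep_edge P x y}\<^sup>*"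

definition GH :: "'a rule set \<Rightarrow> 'a set" where
  "GH P = (\<Union>r\<in>P. head r)"

text \<open>Module sequence induced by an enumeration p (0-indexed: Ps 0 = P_1).\<close>
definition induced_modules :: "'a rule set \<Rightarrow> (nat \<Rightarrow> 'a) \<Rightarrow> nat \<Rightarrow> 'a rule set" where
  "induced_modules P p i = {r \<in> P. \<exists>j\<le>i. \<exists>A\<in>head r. depends P (p j) A}"

definition module_sequence :: "'a rule set \<Rightarrow> (nat \<Rightarrow> 'a rule set) \<Rightarrow> bool" where
  "module_sequence P Ps \<longleftrightarrow> (\<exists>p. range p = GH P \<and> Ps = induced_modules P p)"

end

theory Submission
  imports Defs
begin

text \<open>Every module \<open>P\<^sub>i\<close> is closed in \<open>P\<close> under rules whose head meets \<open>atom P\<^sub>i\<close>, so \<open>atom P\<^sub>i\<close>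
  splits \<open>P\<close> and a stable model of \<open>P\<close> restricts to one of \<open>P\<^sub>i\<close>.  Conversely, since reduct and
  models of a module only look at the atoms of the module, stable models of the modules that
  agree on their overlaps glue to a stable model of \<open>P\<close>: the modules cover \<open>P\<close>, and a smaller
  model of the reduct of \<open>P\<close> would yield a smaller model of the reduct of some module.\<close>

lemma is_model_reduct_iff:
  "is_model (reduct Q M) N \<longleftrightarrow>
    (\<forall>r\<in>Q. body_neg r \<inter> M = {} \<longrightarrow> body_pos r \<subseteq> N \<longrightarrow> head r \<inter> N \<noteq> {})"
  by (auto simp: is_model_def reduct_def head_def body_pos_def body_neg_def)

lemma stable_model_iff:
  "stable_model Q M \<longleftrightarrow>
    is_model (reduct Q M) M \<and> (\<forall>N. N \<subset> M \<longrightarrow> \<not> is_model (reduct Q M) N)"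
  by (simp add: stable_model_def minimal_model_def)

lemma atoms_of_rule_subset_atom: "r \<in> Q \<Longrightarrow> atoms_of_rule r \<subseteq> atom Q"
  by (auto simp: atom_def)

lemma is_model_reduct_mono: "Q \<subseteq> P \<Longrightarrow> is_model (reduct P M) N \<Longrightarrow> is_model (reduct Q M) N"
  by (auto simp: is_model_reduct_iff)

lemma is_model_reduct_restrict:
  "is_model (reduct Q M) N \<longleftrightarrow> is_model (reduct Q (M \<inter> atom Q)) (N \<inter> atom Q)"
proof -
  have "body_neg r \<inter> M = body_neg r \<inter> (M \<inter> atom Q)"
    and "body_pos r \<subseteq> N \<longleftrightarrow> body_pos r \<subseteq> N \<inter> atom Q"
    and "head r \<inter> N = head r \<inter> (N \<inter> atom Q)" if "r \<in> Q" for r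
    using atoms_of_rule_subset_atom[OF that] by (auto simp: atoms_of_rule_def)
  then show ?thesis
    unfolding is_model_reduct_iff by (intro ball_cong) simp_all
qed

lemma stable_model_subset_GH:
  assumes "stable_model P M"
  shows "M \<subseteq> GH P"
proof (rule ccontr)
  have model: "is_model (reduct P M) M"
    using assms by (simp add: stable_model_iff)
  have "is_model (reduct P M) (M \<inter> GH P)"
    unfolding is_model_reduct_iff
  proof (intro ballI impI)
    fix r assume r: "r \<in> P" "body_neg r \<inter> M = {}" "body_pos r \<subseteq> M \<inter> GH P"
    then have "head r \<inter> M \<noteq> {}"
      using model unfolding is_model_reduct_iff by blast
    moreover have "head r \<subseteq> GH P"
      using r(1) by (auto simp: GH_def)
    ultimately show "head r \<inter> (M \<inter> GH P) \<noteq> {}"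
      by blast
  qed
  moreover assume "\<not> M \<subseteq> GH P"
  then have "M \<inter> GH P \<subset> M"
    by blast
  ultimately show False
    using assms by (simp add: stable_model_iff)
qed

text \<open>\<open>is_bottom P Q\<close> says that \<open>atom Q\<close> is a splitting set of \<open>P\<close> (Lifschitz--Turner)
  whose bottom is \<open>Q\<close>.\<close>

definition is_bottom :: "'a rule set \<Rightarrow> 'a rule set \<Rightarrow> bool" where
  "is_bottom P Q \<longleftrightarrow> Q \<subseteq> P \<and> (\<forall>r\<in>P. head r \<inter> atom Q \<noteq> {} \<longrightarrow> r \<in> Q)"

lemma stable_model_restrict_bottom:
  assumes bottom: "is_bottom P Q" and stable: "stable_model P M"
  shows "stable_model Q (M \<inter> atom Q)"
proof -
  have QP: "Q \<subseteq> P"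
    using bottom by (simp add: is_bottom_def)
  have model: "is_model (reduct P M) M"
    using stable by (simp add: stable_model_iff)
  then have "is_model (reduct Q (M \<inter> atom Q)) (M \<inter> atom Q)"
    using is_model_reduct_mono[OF QP] is_model_reduct_restrict by blast
  moreover have "\<not> is_model (reduct Q (M \<inter> atom Q)) N" if "N \<subset> M \<inter> atom Q" for N
  proof
    assume N_model: "is_model (reduct Q (M \<inter> atom Q)) N"
    define N' where "N' = N \<union> (M - atom Q)"
    have N'_inter: "N' \<inter> atom Q = N"
      using \<open>N \<subset> M \<inter> atom Q\<close> by (auto simp: N'_def)
    have "is_model (reduct P M) N'"
      unfolding is_model_reduct_iff
    proof (intro ballI impI)
      fix r assume r: "r \<in> P" "body_neg r \<inter> M = {}" "body_pos r \<subseteq> N'"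
      show "head r \<inter> N' \<noteq> {}"
      proof (cases "r \<in> Q")
        case True
        have "is_model (reduct Q M) N'"
          using N_model N'_inter is_model_reduct_restrict by metis
        then show ?thesis
          using True r by (auto simp: is_model_reduct_iff)
      next
        case False
        then have "head r \<inter> atom Q = {}"
          using bottom r(1) by (auto simp: is_bottom_def)
        moreover have "head r \<inter> M \<noteq> {}"
          using model r \<open>N \<subset> M \<inter> atom Q\<close> by (auto simp: is_model_reduct_iff N'_def)
        ultimately show ?thesis
          by (auto simp: N'_def)
      qed
    qed
    moreover have "N' \<subset> M"
      using \<open>N \<subset> M \<inter> atom Q\<close> by (auto simp: N'_def)
    ultimately show False
      using stable by (auto simp: stable_model_iff)
  qed
  ultimately show ?thesis
    by (simp add: stable_model_iff)
qed

lemma stable_model_glue: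
  fixes Ps :: "'i \<Rightarrow> 'a rule set"
  assumes sub: "\<And>i. Ps i \<subseteq> P"
    and cover: "P \<subseteq> (\<Union>i. Ps i)"
    and atoms: "M \<subseteq> (\<Union>i. atom (Ps i))"
    and stable: "\<And>i. stable_model (Ps i) (M \<inter> atom (Ps i))"
  shows "stable_model P M"
proof -
  have module_model: "is_model (reduct (Ps i) M) M" for i
    using stable[of i] is_model_reduct_restrict[of "Ps i" M M] by (simp add: stable_model_iff)
  have "is_model (reduct P M) M"
    unfolding is_model_reduct_iff
  proof (intro ballI)
    fix r assume "r \<in> P"
    then obtain i where "r \<in> Ps i"
      using cover by blast
    then show "body_neg r \<inter> M = {} \<longrightarrow> body_pos r \<subseteq> M \<longrightarrow> head r \<inter> M \<noteq> {}"
      using module_model[of i] unfolding is_model_reduct_iff by blast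
  qed
  moreover have "\<not> is_model (reduct P M) N" if "N \<subset> M" for N
  proof
    assume N_model: "is_model (reduct P M) N"
    obtain a where a: "a \<in> M" "a \<notin> N"
      using \<open>N \<subset> M\<close> by blast
    then obtain i where "a \<in> atom (Ps i)"
      using atoms by blast
    then have "N \<inter> atom (Ps i) \<subset> M \<inter> atom (Ps i)"
      using \<open>N \<subset> M\<close> a by blast
    moreover have "is_model (reduct (Ps i) (M \<inter> atom (Ps i))) (N \<inter> atom (Ps i))"
      using is_model_reduct_mono[OF sub N_model] is_model_reduct_restrict[of "Ps i" M N]
      by simp
    ultimately show False
      using stable[of i] unfolding stable_model_iff by blast
  qed
  ultimately show ?thesis
    by (simp add: stable_model_iff)
qed

lemma chain_restrict_Union:
  fixes Ms U :: "nat \<Rightarrow> 'a set"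
  assumes "mono U" and step: "\<And>i. Ms i = Ms (Suc i) \<inter> U i"
  shows "Ms i = (\<Union>j. Ms j) \<inter> U i"
proof -
  have later: "Ms i = Ms (i + d) \<inter> U i" for i d
  proof (induction d)
    case 0
    have "Ms i \<subseteq> U i"
      using step[of i] by blast
    then show ?case
      by auto
  next
    case (Suc d)
    have "U i \<subseteq> U (i + d)"
      using \<open>mono U\<close> by (simp add: monoD)
    have "Ms i = Ms (i + d) \<inter> U i"
      by (rule Suc)
    also have "\<dots> = Ms (i + Suc d) \<inter> U (i + d) \<inter> U i"
      using step[of "i + d"] by simp
    also have "\<dots> = Ms (i + Suc d) \<inter> U i"
      using \<open>U i \<subseteq> U (i + d)\<close> by blast
    finally show ?case .
  qed
  have "Ms j \<inter> U i \<subseteq> Ms i" for j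
  proof (cases "j \<le> i")
    case True
    then have "Ms j = Ms i \<inter> U j"
      using later[of j "i - j"] by simp
    then show ?thesis
      by blast
  next
    case False
    then have "Ms i = Ms j \<inter> U i"
      using later[of i "j - i"] by simp
    then show ?thesis
      by blast
  qed
  moreover have "Ms i \<subseteq> U i"
    using later[of i 0] by blast
  ultimately show ?thesis
    by blast
qed

lemma atom_mono: "Q \<subseteq> Q' \<Longrightarrow> atom Q \<subseteq> atom Q'"
  by (auto simp: atom_def)

lemma induced_modules_subset: "induced_modules P p i \<subseteq> P"
  by (auto simp: induced_modules_def)

lemma mono_induced_modules: "mono (induced_modules P p)"
  by (rule monoI) (auto simp: induced_modules_def intro: order.trans)

lemma head_in_induced_modules: "r \<in> P \<Longrightarrow> p i \<in> head r \<Longrightarrow> r \<in> induced_modules P p i"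
  by (auto simp: induced_modules_def depends_def)

lemma is_bottom_induced_modules: "is_bottom P (induced_modules P p i)"
  unfolding is_bottom_def
proof (intro conjI ballI impI induced_modules_subset)
  fix r assume "r \<in> P" and "head r \<inter> atom (induced_modules P p i) \<noteq> {}"
  then obtain A r' where A: "A \<in> head r" "r' \<in> induced_modules P p i" "A \<in> atoms_of_rule r'"
    by (auto simp: atom_def)
  then obtain j A' where j: "j \<le> i" "r' \<in> P" "A' \<in> head r'" "depends P (p j) A'"
    by (auto simp: induced_modules_def)
  then have "dep_edge P A' A"
    using A(3) by (auto simp: dep_edge_def)
  with j(4) have "depends P (p j) A"
    by (simp add: depends_def rtrancl_into_rtrancl)
  then show "r \<in> induced_modules P p i"
    using \<open>r \<in> P\<close> A(1) j(1) by (auto simp: induced_modules_def)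
qed

lemma GH_subset_induced_atoms:
  assumes "GH P \<subseteq> range p"
  shows "GH P \<subseteq> (\<Union>i. atom (induced_modules P p i))"
proof
  fix A assume "A \<in> GH P"
  then obtain r i where "r \<in> P" "A \<in> head r" "A = p i"
    using assms by (auto simp: GH_def)
  then have "A \<in> atoms_of_rule r" and "r \<in> induced_modules P p i"
    by (auto simp: atoms_of_rule_def head_in_induced_modules)
  then show "A \<in> (\<Union>i. atom (induced_modules P p i))"
    by (auto simp: atom_def)
qed

lemma induced_modules_cover:
  assumes "\<forall>r\<in>P. rhead r \<noteq> []" and "GH P \<subseteq> range p"
  shows "P \<subseteq> (\<Union>i. induced_modules P p i)"
proof
  fix r assume "r \<in> P"
  then obtain A where "A \<in> head r"
    using assms(1) unfolding head_def by (meson list.set_sel(1))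
  then obtain i where "A = p i"
    using \<open>r \<in> P\<close> assms(2) by (auto simp: GH_def)
  then show "r \<in> (\<Union>i. induced_modules P p i)"
    using \<open>r \<in> P\<close> \<open>A \<in> head r\<close> head_in_induced_modules by blast
qed

theorem theorem3p6:
  fixes P :: "'a rule set" and Ps :: "nat \<Rightarrow> 'a rule set" and M :: "'a set"
  assumes "\<forall>r\<in>P. rhead r \<noteq> []"
    and "module_sequence P Ps"
  shows "stable_model P M \<longleftrightarrow>
    (\<exists>Ms :: nat \<Rightarrow> 'a set.
        (\<forall>i. stable_model (Ps i) (Ms i)) \<and>
        (\<forall>i. Ms i = Ms (Suc i) \<inter> atom (Ps i)) \<and>
        M = (\<Union>i. Ms i))"
proof -
  obtain p where p: "range p = GH P" and Ps: "Ps = induced_modules P p"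
    using assms(2) by (auto simp: module_sequence_def)
  have mono_atoms: "mono (\<lambda>i. atom (Ps i))"
    by (rule monoI) (simp add: Ps atom_mono monoD[OF mono_induced_modules])
  have atoms: "GH P \<subseteq> (\<Union>i. atom (Ps i))"
    using GH_subset_induced_atoms[of P p] p by (simp add: Ps)
  show ?thesis
  proof
    assume stable: "stable_model P M"
    show "\<exists>Ms. (\<forall>i. stable_model (Ps i) (Ms i)) \<and> (\<forall>i. Ms i = Ms (Suc i) \<inter> atom (Ps i)) \<and>
        M = (\<Union>i. Ms i)"
    proof (intro exI[of _ "\<lambda>i. M \<inter> atom (Ps i)"] conjI allI)
      show "stable_model (Ps i) (M \<inter> atom (Ps i))" for i
        using stable_model_restrict_bottom[OF is_bottom_induced_modules stable] by (simp add: Ps)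
      show "M \<inter> atom (Ps i) = M \<inter> atom (Ps (Suc i)) \<inter> atom (Ps i)" for i
        using monoD[OF mono_atoms, of i "Suc i"] by auto
      show "M = (\<Union>i. M \<inter> atom (Ps i))"
        using stable_model_subset_GH[OF stable] atoms by blast
    qed
  next
    assume "\<exists>Ms. (\<forall>i. stable_model (Ps i) (Ms i)) \<and> (\<forall>i. Ms i = Ms (Suc i) \<inter> atom (Ps i)) \<and>
        M = (\<Union>i. Ms i)"
    then obtain Ms where stable: "\<And>i. stable_model (Ps i) (Ms i)"
      and step: "\<And>i. Ms i = Ms (Suc i) \<inter> atom (Ps i)" and M: "M = (\<Union>i. Ms i)"
      by blast
    have Ms: "Ms i = M \<inter> atom (Ps i)" for i
      using chain_restrict_Union[OF mono_atoms step] M by blast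
    show "stable_model P M"
    proof (rule stable_model_glue)
      show "Ps i \<subseteq> P" for i
        by (simp add: Ps induced_modules_subset)
      show "P \<subseteq> (\<Union>i. Ps i)"
        using induced_modules_cover[OF assms(1)] p by (simp add: Ps)
      show "M \<subseteq> (\<Union>i. atom (Ps i))"
        using M Ms by blast
      show "stable_model (Ps i) (M \<inter> atom (Ps i))" for i
        using stable[of i] by (simp add: Ms)
    qed
  qed
qed

end
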